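(* Let $X$ be a Banach space and $\{Y_i\}_{i\in I}$ a family of closed subspaces of $X$ satisfying the $(\ast)$-condition, with $Sz(Y_i)\le\omega^\alpha$ for all $i\in I$ and some ordinal $\alpha$. If $\overline{\bigcup_{i\in I}Y_i}=X$, then $Sz(X)\le\omega^{\alpha+1}$.
   Context: A family $\{Y_i\}_{i\in I}$ of closed subspaces of $X$ satisfies the $(\ast)$-condition if there is a family $\{P_i\}_{i\in I}$ of linear projections on $X^\ast$ with $\ker P_i=Y_i^\perp$, $\|P_i\|\le1$, such that for every $\varepsilon>0$ there is $\delta(\varepsilon)>0$ with $\|\varphi-P_i\varphi\|<\varepsilon$ for all $i$ whenever $\|\varphi\|=1$ and $\|\varphi+P_i\varphi\|>2-\delta(\varepsilon)$. Szlenk index: for weak*-compact $K\subset X^\ast$, $s_\varepsilon(K)=\{x^\ast\in K:\ \text{every weak*-neighborhood } V\text{ of }x^\ast\text{ has }\mathrm{diam}(V\cap K)>\varepsilon\}$, iterated transfinitely with intersections at limits; $Sz_\varepsilon(K)=\min\{\alpha:s^\alpha_\varepsilon(K)=\emptyset\}$ or $\infty$; $Sz(K)=\sup_\varepsilon Sz_\varepsilon(K)$; $Sz(X)=Sz(B_{X^\ast})$. *)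

theory Defs
  imports "HOL-Analysis.Analysis"
begin

definition dual_sp :: "'a::real_normed_vector set \<Rightarrow> ('a \<Rightarrow> real) set" where
  "dual_sp S = {f. (\<forall>x\<in>S. \<forall>y\<in>S. f (x + y) = f x + f y)
                 \<and> (\<forall>c. \<forall>x\<in>S. f (c *\<^sub>R x) = c * f x)
                 \<and> (\<exists>K. \<forall>x\<in>S. \<bar>f x\<bar> \<le> K * norm x)
                 \<and> (\<forall>x. x \<notin> S \<longrightarrow> f x = 0)}"

definition dnorm :: "'a::real_normed_vector set \<Rightarrow> ('a \<Rightarrow> real) \<Rightarrow> real" where
  "dnorm S f = (SUP x\<in>{x\<in>S. norm x \<le> 1}. \<bar>f x\<bar>)"

definition dual_ball :: "'a::real_normed_vector set \<Rightarrow> ('a \<Rightarrow> real) set" where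
  "dual_ball S = {f \<in> dual_sp S. dnorm S f \<le> 1}"

definition weak_star :: "'a::real_normed_vector set \<Rightarrow> ('a \<Rightarrow> real) topology" where
  "weak_star S = topology_generated_by {{g. g x \<in> U} | x U. x \<in> S \<and> open U}"

definition szlenk_deriv :: "'a::real_normed_vector set \<Rightarrow> real \<Rightarrow> ('a \<Rightarrow> real) set \<Rightarrow> ('a \<Rightarrow> real) set" where
  "szlenk_deriv S \<epsilon> K = {f \<in> K. \<forall>V. (\<exists>U. openin (weak_star S) U \<and> f \<in> U \<and> U \<subseteq> V)
       \<longrightarrow> (\<exists>g\<in>V \<inter> K. \<exists>h\<in>V \<inter> K. dnorm S (\<lambda>x. g x - h x) > \<epsilon>)}"

text \<open>Transfinite iteration along a well-order r (standing for the ordinal type of r):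
  D a is the derived set s_eps^gamma(K) where gamma is the order type of the initial segment below a,
  via the (equivalent, for the monotone operator s_eps) recursion
  s^gamma(K) = K \<inter> \<Inter>_{delta<gamma} s(s^delta(K)).  The last set is s^{type r}(K).
  szlenk_iter_empty S eps K r means s_eps^{type r}(K) = {}, i.e. Sz_eps(K) \<le> type r.\<close>
definition szlenk_iter_empty :: "'a::real_normed_vector set \<Rightarrow> real \<Rightarrow> ('a \<Rightarrow> real) set \<Rightarrow> 'b rel \<Rightarrow> bool" where
  "szlenk_iter_empty S \<epsilon> K r \<longleftrightarrow>
     (\<exists>D. (\<forall>a\<in>Field r. D a = K \<inter> (\<Inter>b\<in>{b. (b, a) \<in> r \<and> b \<noteq> a}. szlenk_deriv S \<epsilon> (D b)))
        \<and> K \<inter> (\<Inter>b\<in>Field r. szlenk_deriv S \<epsilon> (D b)) = {})"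

text \<open>Sz(S) \<le> type r, where Sz(S) = sup_eps Sz_eps(B_{S*}).\<close>
definition szlenk_le :: "'a::real_normed_vector set \<Rightarrow> 'b rel \<Rightarrow> bool" where
  "szlenk_le S r \<longleftrightarrow> (\<forall>\<epsilon>>0. szlenk_iter_empty S \<epsilon> (dual_ball S) r)"

definition ord_succ :: "'b rel \<Rightarrow> 'b option rel" where
  "ord_succ r = {(Some a, Some b) | a b. (a, b) \<in> r}
              \<union> {(x, None) | x. x = None \<or> (\<exists>a\<in>Field r. x = Some a)}"

text \<open>omega^alpha (Cantor normal form): finitely supported functions Field r \<rightarrow> nat,
  compared at the r-largest point where they differ.\<close>
definition omega_pow :: "'b rel \<Rightarrow> ('b \<Rightarrow> nat) rel" where
  "omega_pow r = {(f, g). (\<forall>x. x \<notin> Field r \<longrightarrow> f x = 0 \<and> g x = 0)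
       \<and> finite {x. f x \<noteq> 0} \<and> finite {x. g x \<noteq> 0}
       \<and> (f = g \<or> (\<exists>x. f x < g x \<and> (\<forall>y. (x, y) \<in> r \<and> y \<noteq> x \<longrightarrow> f y = g y)))}"

definition star_condition :: "'i set \<Rightarrow> ('i \<Rightarrow> 'a::real_normed_vector set) \<Rightarrow> bool" where
  "star_condition I Y \<longleftrightarrow>
    (\<exists>P :: 'i \<Rightarrow> ('a \<Rightarrow> real) \<Rightarrow> ('a \<Rightarrow> real).
       (\<forall>i\<in>I.
          (\<forall>\<phi>\<in>dual_sp UNIV. P i \<phi> \<in> dual_sp UNIV)
        \<and> (\<forall>\<phi>\<in>dual_sp UNIV. \<forall>\<psi>\<in>dual_sp UNIV. P i (\<lambda>x. \<phi> x + \<psi> x) = (\<lambda>x. P i \<phi> x + P i \<psi> x))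
        \<and> (\<forall>c. \<forall>\<phi>\<in>dual_sp UNIV. P i (\<lambda>x. c * \<phi> x) = (\<lambda>x. c * P i \<phi> x))
        \<and> (\<forall>\<phi>\<in>dual_sp UNIV. P i (P i \<phi>) = P i \<phi>)
        \<and> {\<phi>\<in>dual_sp UNIV. P i \<phi> = (\<lambda>x. 0)} = {\<phi>\<in>dual_sp UNIV. \<forall>y\<in>Y i. \<phi> y = 0}
        \<and> (\<forall>\<phi>\<in>dual_sp UNIV. dnorm UNIV (P i \<phi>) \<le> dnorm UNIV \<phi>))
     \<and> (\<forall>\<epsilon>>0. \<exists>\<delta>>0. \<forall>i\<in>I. \<forall>\<phi>\<in>dual_sp UNIV.
          dnorm UNIV \<phi> = 1 \<and> dnorm UNIV (\<lambda>x. \<phi> x + P i \<phi> x) > 2 - \<delta>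
            \<longrightarrow> dnorm UNIV (\<lambda>x. \<phi> x - P i \<phi> x) < \<epsilon>))"

end

theory Submission
  imports Defs
begin

text \<open>Fix \<epsilon> > 0. The star condition makes restriction to Y i almost isometric on functionals
  that nearly attain their norm on Y i: if \<parallel>\<phi>|Y i\<parallel> > q\<parallel>\<phi>\<parallel> then \<phi> - P i \<phi> is small,
  while P i \<phi> only depends on \<phi>|Y i and has norm at most \<parallel>\<phi>|Y i\<parallel> (Hahn-Banach), so
  \<parallel>\<phi> - \<psi>\<parallel> < \<parallel>(\<phi> - \<psi>)|Y i\<parallel> + \<epsilon>/2 for two such functionals.

  For n < \<omega> and \<gamma> < \<omega>^\<alpha> let E(\<omega>^\<alpha>\<cdot>n + \<gamma>) be the set of \<phi> in the dual ball of norm at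
  most q^n whose restriction to every Y i with \<parallel>\<phi>|Y i\<parallel> > q^(n+1) lies in the \<gamma>-th
  (\<epsilon>/2)-Szlenk derived set of the dual ball of Y i. Restriction carries \<epsilon>-derivatives of
  these sets into (\<epsilon>/2)-derivatives, so the sets E dominate the \<epsilon>-Szlenk derivation of the
  dual ball of X; after all \<gamma> < \<omega>^\<alpha>, Sz(Y i) \<le> \<omega>^\<alpha> and density of the union of the Y i
  push the norm bound from q^n down to q^(n+1). Since q^N < \<epsilon>/2 for large N, the derivation
  terminates before \<omega>^\<alpha>\<cdot>\<omega>.\<close>

section \<open>Norm-preserving extension of linear functionals\<close>

text \<open>Partial extensions in the Zorn argument are represented by their graphs, so that a chain
  is bounded by its union.\<close>

definition dominated_linear_graph :: "real \<Rightarrow> ('a::real_normed_vector \<times> real) set \<Rightarrow> bool" where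
  "dominated_linear_graph C G \<longleftrightarrow>
     (\<forall>x a b. (x, a) \<in> G \<longrightarrow> (x, b) \<in> G \<longrightarrow> a = b)
   \<and> (\<forall>x a z b. (x, a) \<in> G \<longrightarrow> (z, b) \<in> G \<longrightarrow> (x + z, a + b) \<in> G)
   \<and> (\<forall>x a c. (x, a) \<in> G \<longrightarrow> (c *\<^sub>R x, c * a) \<in> G)
   \<and> (\<forall>x a. (x, a) \<in> G \<longrightarrow> a \<le> C * norm x)"

lemma
  assumes "dominated_linear_graph C G"
  shows dominated_graph_unique: "(x, a) \<in> G \<Longrightarrow> (x, b) \<in> G \<Longrightarrow> a = b"
    and dominated_graph_add: "(x, a) \<in> G \<Longrightarrow> (z, b) \<in> G \<Longrightarrow> (x + z, a + b) \<in> G"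
    and dominated_graph_scale: "(x, a) \<in> G \<Longrightarrow> (c *\<^sub>R x, c * a) \<in> G"
    and dominated_graph_bound: "(x, a) \<in> G \<Longrightarrow> a \<le> C * norm x"
  using assms unfolding dominated_linear_graph_def by blast+

lemma dominated_graph_diff:
  assumes "dominated_linear_graph C G" "(x, a) \<in> G" "(z, b) \<in> G"
  shows "(x - z, a - b) \<in> G"
  using dominated_graph_add[OF assms(1,2) dominated_graph_scale[OF assms(1,3), of "-1"]] by simp

lemma dominated_linear_graph_Union_chain:
  assumes chain: "subset.chain \<A> \<G>" and dom: "\<And>G. G \<in> \<G> \<Longrightarrow> dominated_linear_graph C G"
  shows "dominated_linear_graph C (\<Union>\<G>)"
proof -
  have common: "\<exists>G\<in>\<G>. p \<in> G \<and> p' \<in> G" if "p \<in> \<Union>\<G>" "p' \<in> \<Union>\<G>" for p p'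
  proof -
    have "{p, p'} \<subseteq> \<Union>\<G>" "\<G> \<noteq> {}" using that by auto
    then obtain G where "G \<in> \<G>" "{p, p'} \<subseteq> G"
      using finite_subset_Union_chain[OF _ _ _ chain] by (metis finite.emptyI finite.insertI)
    then show ?thesis by blast
  qed
  show ?thesis
    unfolding dominated_linear_graph_def
  proof (intro conjI allI impI)
    fix x a b assume "(x, a) \<in> \<Union>\<G>" "(x, b) \<in> \<Union>\<G>"
    then obtain G where "G \<in> \<G>" "(x, a) \<in> G" "(x, b) \<in> G" using common by blast
    then show "a = b" using dom dominated_graph_unique by blast
  next
    fix x a z b assume "(x, a) \<in> \<Union>\<G>" "(z, b) \<in> \<Union>\<G>"
    then obtain G where "G \<in> \<G>" "(x, a) \<in> G" "(z, b) \<in> G" using common by blast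
    then show "(x + z, a + b) \<in> \<Union>\<G>" using dom dominated_graph_add by blast
  qed (use dom dominated_graph_scale dominated_graph_bound in blast)+
qed

definition extend_graph :: "('a::real_vector \<times> real) set \<Rightarrow> 'a \<Rightarrow> real \<Rightarrow> ('a \<times> real) set" where
  "extend_graph G x v = {(z + t *\<^sub>R x, a + t * v) | z a t. (z, a) \<in> G}"

lemma dominated_graph_extension_value:
  assumes G: "dominated_linear_graph C G" and "C \<ge> 0" and "(0, 0) \<in> G"
  obtains v where "\<And>w b. (w, b) \<in> G \<Longrightarrow> v \<le> C * norm (w + x) - b"
    and "\<And>u a. (u, a) \<in> G \<Longrightarrow> - a - C * norm (u + x) \<le> v"
proof -
  define L where "L = {- a - C * norm (u + x) | u a. (u, a) \<in> G}"
  have below: "l \<le> C * norm (w + x) - b" if "l \<in> L" "(w, b) \<in> G" for l w b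
  proof -
    obtain u a where ua: "(u, a) \<in> G" "l = - a - C * norm (u + x)" using \<open>l \<in> L\<close> L_def by blast
    have "b - a \<le> C * norm (w - u)"
      using dominated_graph_bound[OF G dominated_graph_diff[OF G that(2) ua(1)]] .
    also have "\<dots> \<le> C * (norm (w + x) + norm (u + x))"
      using norm_triangle_ineq4[of "w + x" "u + x"] \<open>C \<ge> 0\<close> by (simp add: mult_left_mono)
    finally show ?thesis using ua(2) by (simp add: algebra_simps)
  qed
  have "L \<noteq> {}" using \<open>(0, 0) \<in> G\<close> L_def by blast
  moreover have "bdd_above L" using below[OF _ \<open>(0, 0) \<in> G\<close>] by (rule bdd_aboveI)
  ultimately show ?thesis
    using below by (intro that[of "Sup L"] cSup_least cSup_upper) (auto simp: L_def)
qed

lemma extend_graph_bound: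
  assumes G: "dominated_linear_graph C G" and za: "(z, a) \<in> G"
    and upper: "\<And>w b. (w, b) \<in> G \<Longrightarrow> v \<le> C * norm (w + x) - b"
    and lower: "\<And>u b. (u, b) \<in> G \<Longrightarrow> - b - C * norm (u + x) \<le> v"
  shows "a + t * v \<le> C * norm (z + t *\<^sub>R x)"
proof -
  have scaled: "((1/t) *\<^sub>R z, (1/t) * a) \<in> G" using dominated_graph_scale[OF G za] .
  have norm_eq: "norm (z + t *\<^sub>R x) = \<bar>t\<bar> * norm ((1/t) *\<^sub>R z + x)" if "t \<noteq> 0"
  proof -
    have "z + t *\<^sub>R x = t *\<^sub>R ((1/t) *\<^sub>R z + x)" using that by (simp add: algebra_simps)
    then show ?thesis by simp
  qed
  consider "t < 0" | "t = 0" | "t > 0" by linarith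
  then show ?thesis
  proof cases
    case 1
    have "(-t) * (- ((1/t) * a) - C * norm ((1/t) *\<^sub>R z + x)) \<le> (-t) * v"
      using lower[OF scaled] 1 by (intro mult_left_mono) auto
    then show ?thesis using 1 norm_eq by (simp add: algebra_simps)
  next
    case 2
    then show ?thesis using dominated_graph_bound[OF G za] by simp
  next
    case 3
    have "t * v \<le> t * (C * norm ((1/t) *\<^sub>R z + x) - (1/t) * a)"
      using upper[OF scaled] 3 by (intro mult_left_mono) auto
    then show ?thesis using 3 norm_eq by (simp add: algebra_simps)
  qed
qed

lemma extend_graphI: "(z, a) \<in> G \<Longrightarrow> (z + t *\<^sub>R x, a + t * v) \<in> extend_graph G x v"
  unfolding extend_graph_def by blast

lemma extend_graphE:
  assumes "(y, b) \<in> extend_graph G x v"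
  obtains z a t where "(z, a) \<in> G" "y = z + t *\<^sub>R x" "b = a + t * v"
  using assms unfolding extend_graph_def by blast

lemma extend_graph_dominated:
  assumes G: "dominated_linear_graph C G" and x: "x \<notin> Domain G"
    and upper: "\<And>w b. (w, b) \<in> G \<Longrightarrow> v \<le> C * norm (w + x) - b"
    and lower: "\<And>u b. (u, b) \<in> G \<Longrightarrow> - b - C * norm (u + x) \<le> v"
  shows "dominated_linear_graph C (extend_graph G x v)"
  unfolding dominated_linear_graph_def
proof (intro conjI allI impI)
  fix y a b assume "(y, a) \<in> extend_graph G x v" "(y, b) \<in> extend_graph G x v"
  then obtain z1 a1 t1 z2 a2 t2 where h: "(z1, a1) \<in> G" "(z2, a2) \<in> G"
    "y = z1 + t1 *\<^sub>R x" "a = a1 + t1 * v" "y = z2 + t2 *\<^sub>R x" "b = a2 + t2 * v"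
    by (metis extend_graphE)
  have "t1 = t2"
  proof (rule ccontr)
    assume "t1 \<noteq> t2"
    have "((1 / (t1 - t2)) *\<^sub>R (z2 - z1), (1 / (t1 - t2)) * (a2 - a1)) \<in> G"
      using dominated_graph_scale[OF G dominated_graph_diff[OF G h(2,1)]] .
    moreover have "(1 / (t1 - t2)) *\<^sub>R (z2 - z1) = x"
    proof -
      have "z2 - z1 = (t1 - t2) *\<^sub>R x" using h(3,5) by (simp add: algebra_simps)
      then show ?thesis using \<open>t1 \<noteq> t2\<close> by simp
    qed
    ultimately show False using x by (metis Domain.DomainI)
  qed
  moreover from this have "z1 = z2" using h(3,5) by simp
  ultimately show "a = b" using h dominated_graph_unique[OF G h(1)] by simp
next
  fix y a z b assume "(y, a) \<in> extend_graph G x v" "(z, b) \<in> extend_graph G x v"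
  then obtain z1 a1 t1 z2 a2 t2 where h: "(z1, a1) \<in> G" "(z2, a2) \<in> G"
    "y = z1 + t1 *\<^sub>R x" "a = a1 + t1 * v" "z = z2 + t2 *\<^sub>R x" "b = a2 + t2 * v"
    by (metis extend_graphE)
  have "(z1 + z2 + (t1 + t2) *\<^sub>R x, a1 + a2 + (t1 + t2) * v) \<in> extend_graph G x v"
    using extend_graphI[OF dominated_graph_add[OF G h(1,2)]] .
  moreover have "y + z = z1 + z2 + (t1 + t2) *\<^sub>R x" "a + b = a1 + a2 + (t1 + t2) * v"
    using h by (simp_all add: algebra_simps)
  ultimately show "(y + z, a + b) \<in> extend_graph G x v" by simp
next
  fix y a c assume "(y, a) \<in> extend_graph G x v"
  then obtain z1 a1 t1 where h: "(z1, a1) \<in> G" "y = z1 + t1 *\<^sub>R x" "a = a1 + t1 * v"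
    by (rule extend_graphE)
  have "(c *\<^sub>R z1 + (c * t1) *\<^sub>R x, c * a1 + (c * t1) * v) \<in> extend_graph G x v"
    using extend_graphI[OF dominated_graph_scale[OF G h(1)]] .
  moreover have "c *\<^sub>R y = c *\<^sub>R z1 + (c * t1) *\<^sub>R x" "c * a = c * a1 + (c * t1) * v"
    using h by (simp_all add: algebra_simps)
  ultimately show "(c *\<^sub>R y, c * a) \<in> extend_graph G x v" by simp
next
  fix y a assume "(y, a) \<in> extend_graph G x v"
  then obtain z1 a1 t1 where "(z1, a1) \<in> G" "y = z1 + t1 *\<^sub>R x" "a = a1 + t1 * v"
    by (rule extend_graphE)
  then show "a \<le> C * norm y" using extend_graph_bound[OF G _ upper lower] by simp
qed

lemma maximal_dominated_graph_total:
  assumes dom: "dominated_linear_graph C M" and "C \<ge> 0" and "(0, 0) \<in> M"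
    and max: "\<And>G. dominated_linear_graph C G \<Longrightarrow> M \<subseteq> G \<Longrightarrow> G = M"
  shows "x \<in> Domain M"
proof (rule ccontr)
  assume x: "x \<notin> Domain M"
  obtain v where "\<And>w b. (w, b) \<in> M \<Longrightarrow> v \<le> C * norm (w + x) - b"
    "\<And>u a. (u, a) \<in> M \<Longrightarrow> - a - C * norm (u + x) \<le> v"
    using dominated_graph_extension_value[OF dom \<open>C \<ge> 0\<close> \<open>(0, 0) \<in> M\<close>] by blast
  then have "dominated_linear_graph C (extend_graph M x v)"
    using extend_graph_dominated[OF dom x] by blast
  moreover have "M \<subseteq> extend_graph M x v"
  proof
    fix p assume "p \<in> M"
    moreover obtain z a where "p = (z, a)" by fastforce
    ultimately show "p \<in> extend_graph M x v" using extend_graphI[of z a M 0] by simp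
  qed
  ultimately have "extend_graph M x v = M" by (rule max)
  moreover have "(x, v) \<in> extend_graph M x v"
    using extend_graphI[OF \<open>(0, 0) \<in> M\<close>, of 1] by simp
  ultimately show False using x by blast
qed

lemma total_dominated_graph_functional:
  assumes dom: "dominated_linear_graph C M" and total: "\<And>x. x \<in> Domain M"
  obtains F where "linear F" "\<And>x a. (x, a) \<in> M \<Longrightarrow> F x = a" "\<And>x. \<bar>F x\<bar> \<le> C * norm x"
proof
  define F where "F x = (THE a. (x, a) \<in> M)" for x
  show F_eq: "F x = a" if "(x, a) \<in> M" for x a
    unfolding F_def by (rule the_equality) (use that dominated_graph_unique[OF dom] in blast)+
  have F_mem: "(x, F x) \<in> M" for x
    using total[of x] F_eq by blast
  show "linear F"
  proof (rule linearI)
    show "F (x + y) = F x + F y" for x y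
      using F_eq[OF dominated_graph_add[OF dom F_mem F_mem]] .
    show "F (c *\<^sub>R x) = c *\<^sub>R F x" for c x
      using F_eq[OF dominated_graph_scale[OF dom F_mem]] by simp
  qed
  show "\<bar>F x\<bar> \<le> C * norm x" for x
    using dominated_graph_bound[OF dom F_mem[of x]]
      dominated_graph_bound[OF dom dominated_graph_scale[OF dom F_mem[of x], of "-1"]]
    by (simp add: abs_le_iff)
qed

lemma Hahn_Banach_dominated_extension:
  fixes f :: "'a::real_normed_vector \<Rightarrow> real"
  assumes Y: "subspace Y" and "C \<ge> 0"
    and f_add: "\<And>x y. x \<in> Y \<Longrightarrow> y \<in> Y \<Longrightarrow> f (x + y) = f x + f y"
    and f_scale: "\<And>c x. x \<in> Y \<Longrightarrow> f (c *\<^sub>R x) = c * f x"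
    and f_bound: "\<And>x. x \<in> Y \<Longrightarrow> f x \<le> C * norm x"
  obtains F where "linear F" "\<And>x. x \<in> Y \<Longrightarrow> F x = f x" "\<And>x. \<bar>F x\<bar> \<le> C * norm x"
proof -
  define \<A> where "\<A> = {G. dominated_linear_graph C G \<and> (\<forall>y\<in>Y. (y, f y) \<in> G)}"
  have "{(y, f y) | y. y \<in> Y} \<in> \<A>"
    unfolding \<A>_def dominated_linear_graph_def
    using f_add f_scale f_bound subspace_add[OF Y] subspace_scale[OF Y] by fastforce
  have "\<exists>U\<in>\<A>. \<forall>G\<in>\<G>. G \<subseteq> U" if "\<G> \<in> chains \<A>" for \<G>
  proof (cases "\<G> = {}")
    case False
    have chain: "subset.chain \<A> \<G>" using that unfolding chains_alt_def by blast
    then have "\<G> \<subseteq> \<A>" unfolding subset.chain_def by blast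
    then have "dominated_linear_graph C (\<Union>\<G>)" "\<forall>y\<in>Y. (y, f y) \<in> \<Union>\<G>"
      using dominated_linear_graph_Union_chain[OF chain] False unfolding \<A>_def by blast+
    then show ?thesis unfolding \<A>_def by blast
  qed (use \<open>{(y, f y) | y. y \<in> Y} \<in> \<A>\<close> in blast)
  then obtain M where M: "M \<in> \<A>" and max: "\<And>G. G \<in> \<A> \<Longrightarrow> M \<subseteq> G \<Longrightarrow> G = M"
    using Zorn_Lemma2 by force
  have dom: "dominated_linear_graph C M" and fM: "\<And>y. y \<in> Y \<Longrightarrow> (y, f y) \<in> M"
    using M unfolding \<A>_def by blast+
  have "(0, 0) \<in> M" using fM[OF subspace_0[OF Y]] dominated_graph_scale[OF dom, of 0 _ 0] by simp
  moreover have "G = M" if "dominated_linear_graph C G" "M \<subseteq> G" for G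
    using max that fM unfolding \<A>_def by blast
  ultimately have "\<And>x. x \<in> Domain M" using maximal_dominated_graph_total[OF dom \<open>C \<ge> 0\<close>] by blast
  then obtain F where "linear F" "\<And>x a. (x, a) \<in> M \<Longrightarrow> F x = a" "\<And>x. \<bar>F x\<bar> \<le> C * norm x"
    using total_dominated_graph_functional[OF dom] by blast
  then show ?thesis using that fM by blast
qed

section \<open>Dual norms, restriction and the weak* topology\<close>

lemma dual_sp_UNIV_iff: "f \<in> dual_sp UNIV \<longleftrightarrow> bounded_linear f"
proof
  assume "f \<in> dual_sp UNIV"
  then obtain K where "\<And>x y. f (x + y) = f x + f y" "\<And>c x. f (c *\<^sub>R x) = c * f x"
    "\<And>x. \<bar>f x\<bar> \<le> K * norm x"
    unfolding dual_sp_def by blast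
  then show "bounded_linear f" by (intro bounded_linear_intro[where K = K]) (auto simp: mult.commute)
next
  assume "bounded_linear f"
  then interpret bounded_linear f .
  obtain K where "\<And>x. norm (f x) \<le> norm x * K" using bounded by blast
  then show "f \<in> dual_sp UNIV" unfolding dual_sp_def using add scale by (auto simp: mult.commute)
qed

lemma dual_ball_UNIV_iff: "f \<in> dual_ball UNIV \<longleftrightarrow> bounded_linear f \<and> dnorm UNIV f \<le> 1"
  by (simp add: dual_ball_def dual_sp_UNIV_iff)

lemma dnorm_upper:
  assumes "bounded_linear f" "x \<in> S" "norm x \<le> 1"
  shows "\<bar>f x\<bar> \<le> dnorm S f"
proof -
  have "\<bar>f y\<bar> \<le> onorm f" if "norm y \<le> 1" for y
    using onorm[OF assms(1), of y] onorm_pos_le[OF assms(1)] that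
    by (metis real_norm_def mult_left_le order_trans)
  then have "bdd_above ((\<lambda>x. \<bar>f x\<bar>) ` {x \<in> S. norm x \<le> 1})" by (intro bdd_aboveI2) auto
  then show ?thesis unfolding dnorm_def using assms(2,3) by (intro cSUP_upper) auto
qed

lemma dnorm_least: "0 \<in> S \<Longrightarrow> (\<And>x. x \<in> S \<Longrightarrow> norm x \<le> 1 \<Longrightarrow> \<bar>f x\<bar> \<le> M) \<Longrightarrow> dnorm S f \<le> M"
  unfolding dnorm_def by (rule cSUP_least) auto

lemma less_dnormE:
  assumes "0 \<in> S" "c < dnorm S f"
  obtains x where "x \<in> S" "norm x \<le> 1" "c < \<bar>f x\<bar>"
  using dnorm_least[of S f c] assms by force

lemma dnorm_nonneg: "bounded_linear f \<Longrightarrow> 0 \<in> S \<Longrightarrow> 0 \<le> dnorm S f"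
  using dnorm_upper[of f 0 S] by simp

lemma dnorm_cong: "(\<And>x. x \<in> S \<Longrightarrow> f x = g x) \<Longrightarrow> dnorm S f = dnorm S g"
  unfolding dnorm_def by (auto intro!: SUP_cong)

lemma dnorm_mono: "bounded_linear f \<Longrightarrow> 0 \<in> S \<Longrightarrow> S \<subseteq> T \<Longrightarrow> dnorm S f \<le> dnorm T f"
  by (rule dnorm_least) (auto intro: dnorm_upper)

lemma abs_le_dnorm_mult_norm:
  assumes f: "bounded_linear f" and S: "subspace S" and "x \<in> S"
  shows "\<bar>f x\<bar> \<le> dnorm S f * norm x"
proof (cases "x = 0")
  case True
  then show ?thesis using linear_0[OF bounded_linear.linear[OF f]] by simp
next
  case False
  have "\<bar>f ((1 / norm x) *\<^sub>R x)\<bar> \<le> dnorm S f"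
    using False \<open>x \<in> S\<close> by (intro dnorm_upper[OF f] subspace_scale[OF S]) auto
  moreover have "f ((1 / norm x) *\<^sub>R x) = f x / norm x"
    using linear_scale[OF bounded_linear.linear[OF f]] by simp
  ultimately show ?thesis using False by (simp add: divide_le_eq)
qed

lemma dnorm_scale:
  assumes f: "bounded_linear f" and "0 \<in> S"
  shows "dnorm S (\<lambda>x. c * f x) = \<bar>c\<bar> * dnorm S f"
proof -
  have le: "dnorm S (\<lambda>x. c * g x) \<le> \<bar>c\<bar> * dnorm S g" if "bounded_linear g" for c g
    using \<open>0 \<in> S\<close> by (rule dnorm_least) (auto simp: abs_mult intro!: mult_left_mono dnorm_upper that)
  show ?thesis
  proof (cases "c = 0")
    case True
    then show ?thesis
      using le[OF f, of 0] dnorm_nonneg[OF bounded_linear_const_mult[OF f] \<open>0 \<in> S\<close>, of 0] by simp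
  next
    case False
    have "dnorm S f = dnorm S (\<lambda>x. (1 / c) * (c * f x))" using False by simp
    also have "\<dots> \<le> \<bar>1 / c\<bar> * dnorm S (\<lambda>x. c * f x)" by (rule le[OF bounded_linear_const_mult[OF f]])
    finally have "\<bar>c\<bar> * dnorm S f \<le> dnorm S (\<lambda>x. c * f x)" using False by (simp add: field_simps)
    then show ?thesis using le[OF f, of c] by simp
  qed
qed

lemma dnorm_add_le:
  "bounded_linear f \<Longrightarrow> bounded_linear g \<Longrightarrow> 0 \<in> S \<Longrightarrow> dnorm S (\<lambda>x. f x + g x) \<le> dnorm S f + dnorm S g"
  by (rule dnorm_least) (auto intro!: order_trans[OF abs_triangle_ineq] add_mono dnorm_upper)

lemma dnorm_diff_le:
  "bounded_linear f \<Longrightarrow> bounded_linear g \<Longrightarrow> 0 \<in> S \<Longrightarrow> dnorm S (\<lambda>x. f x - g x) \<le> dnorm S f + dnorm S g"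
  by (rule dnorm_least) (auto intro!: order_trans[OF abs_triangle_ineq4] add_mono dnorm_upper)

lemma dnorm_le_if_dense:
  assumes f: "bounded_linear f" and dense: "closure S = UNIV" and "0 \<le> c"
    and bound: "\<And>y. y \<in> S \<Longrightarrow> \<bar>f y\<bar> \<le> c * norm y"
  shows "dnorm UNIV f \<le> c"
proof (rule dnorm_least)
  fix x :: 'a assume "norm x \<le> 1"
  have "continuous_on (closure S) (\<lambda>x. \<bar>f x\<bar> - c * norm x)"
    using linear_continuous_on[OF f] by (intro continuous_intros)
  then have "\<bar>f x\<bar> - c * norm x \<le> 0"
    using continuous_le_on_closure[of S "\<lambda>x. \<bar>f x\<bar> - c * norm x" x 0] dense bound by simp
  moreover have "c * norm x \<le> c" using \<open>norm x \<le> 1\<close> \<open>0 \<le> c\<close> by (simp add: mult_left_le)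
  ultimately show "\<bar>f x\<bar> \<le> c" by linarith
qed simp

lemma dual_norm_preserving_extension:
  assumes Y: "subspace Y" and f: "bounded_linear f"
  obtains F where "bounded_linear F" "\<And>y. y \<in> Y \<Longrightarrow> F y = f y" "dnorm UNIV F \<le> dnorm Y f"
proof -
  interpret f: bounded_linear f by (fact f)
  define C where "C = dnorm Y f"
  have "0 \<le> C" unfolding C_def using dnorm_nonneg[OF f subspace_0[OF Y]] .
  moreover have "f y \<le> C * norm y" if "y \<in> Y" for y
    using abs_le_dnorm_mult_norm[OF f Y that] unfolding C_def by linarith
  ultimately obtain F where F: "linear F" "\<And>y. y \<in> Y \<Longrightarrow> F y = f y" "\<And>x. \<bar>F x\<bar> \<le> C * norm x"
    using Hahn_Banach_dominated_extension[OF Y] f.add f.scale by (metis real_scaleR_def)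
  have "bounded_linear F"
    using F(1,3) by (intro bounded_linear_intro[where K = C]) (auto simp: linear_add linear_scale mult.commute)
  moreover have "dnorm UNIV F \<le> C"
    using F(3) \<open>0 \<le> C\<close> by (intro dnorm_least) (auto intro: order_trans mult_left_le)
  ultimately show ?thesis using that F(2) unfolding C_def by blast
qed

definition dual_restrict :: "'a set \<Rightarrow> ('a \<Rightarrow> real) \<Rightarrow> 'a \<Rightarrow> real" where
  "dual_restrict Y f x = (if x \<in> Y then f x else 0)"

lemma dnorm_dual_restrict: "dnorm Y (dual_restrict Y f) = dnorm Y f"
  by (rule dnorm_cong) (simp add: dual_restrict_def)

lemma dual_restrict_in_dual_ball:
  assumes f: "f \<in> dual_ball UNIV" and Y: "subspace Y"
  shows "dual_restrict Y f \<in> dual_ball Y"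
proof -
  have bl: "bounded_linear f" and "dnorm UNIV f \<le> 1" using f dual_ball_UNIV_iff by blast+
  interpret bounded_linear f by (fact bl)
  obtain K where "\<And>x. norm (f x) \<le> norm x * K" using bounded by blast
  then have "dual_restrict Y f \<in> dual_sp Y"
    unfolding dual_sp_def dual_restrict_def
    using add scale subspace_add[OF Y] subspace_scale[OF Y] by (auto simp: mult.commute)
  moreover have "dnorm Y f \<le> dnorm UNIV f" using dnorm_mono[OF bl subspace_0[OF Y]] by simp
  ultimately show ?thesis
    unfolding dual_ball_def using \<open>dnorm UNIV f \<le> 1\<close> by (simp add: dnorm_dual_restrict)
qed

lemma openin_weak_star_evaluation: "x \<in> S \<Longrightarrow> open A \<Longrightarrow> openin (weak_star S) {g. g x \<in> A}"
  unfolding weak_star_def by (rule topology_generated_by_Basis) blast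

lemma openin_weak_star_dual_restrict:
  assumes "openin (weak_star Y) U"
  shows "openin (weak_star UNIV) {\<psi>. dual_restrict Y \<psi> \<in> U}"
proof -
  have "generate_topology_on {{g. g x \<in> A} | x A. x \<in> Y \<and> open A} U"
    using assms unfolding weak_star_def openin_topology_generated_by_iff .
  then have "generate_topology_on {{g. g x \<in> A} | x A. x \<in> UNIV \<and> open A} {\<psi>. dual_restrict Y \<psi> \<in> U}"
  proof (induction rule: generate_topology_on.induct)
    case Empty
    then show ?case by (simp add: generate_topology_on.Empty)
  next
    case (Int a b)
    have "{\<psi>. dual_restrict Y \<psi> \<in> a \<inter> b} = {\<psi>. dual_restrict Y \<psi> \<in> a} \<inter> {\<psi>. dual_restrict Y \<psi> \<in> b}"
      by blast
    then show ?case using Int by (simp add: generate_topology_on.Int)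
  next
    case (UN K)
    have "{\<psi>. dual_restrict Y \<psi> \<in> \<Union>K} = (\<Union>k\<in>K. {\<psi>. dual_restrict Y \<psi> \<in> k})" by blast
    then show ?case using UN by (auto intro!: generate_topology_on.UN)
  next
    case (Basis s)
    then obtain x A where xA: "s = {g. g x \<in> A}" "x \<in> Y" "open A" by blast
    then have "{\<psi>. dual_restrict Y \<psi> \<in> s} = {g. g x \<in> A}" by (simp add: dual_restrict_def)
    then show ?case using xA by (auto intro!: generate_topology_on.Basis)
  qed
  then show ?thesis unfolding weak_star_def openin_topology_generated_by_iff .
qed

section \<open>Szlenk derivations and the ordinals \<omega>^\<alpha>\<close>

lemma szlenk_deriv_subset: "szlenk_deriv S \<epsilon> K \<subseteq> K"
  unfolding szlenk_deriv_def by blast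

lemma szlenk_deriv_mono: "K \<subseteq> K' \<Longrightarrow> szlenk_deriv S \<epsilon> K \<subseteq> szlenk_deriv S \<epsilon> K'"
  unfolding szlenk_deriv_def by blast

definition exhausting_szlenk_derivation ::
    "'a::real_normed_vector set \<Rightarrow> real \<Rightarrow> ('a \<Rightarrow> real) set \<Rightarrow> 'b rel \<Rightarrow> ('b \<Rightarrow> ('a \<Rightarrow> real) set) \<Rightarrow> bool"
  where "exhausting_szlenk_derivation S \<epsilon> K r D \<longleftrightarrow>
    (\<forall>a\<in>Field r. D a = K \<inter> (\<Inter>b\<in>{b. (b, a) \<in> r \<and> b \<noteq> a}. szlenk_deriv S \<epsilon> (D b)))
    \<and> K \<inter> (\<Inter>b\<in>Field r. szlenk_deriv S \<epsilon> (D b)) = {}"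

lemma szlenk_iter_empty_iff: "szlenk_iter_empty S \<epsilon> K r \<longleftrightarrow> (\<exists>D. exhausting_szlenk_derivation S \<epsilon> K r D)"
  unfolding szlenk_iter_empty_def exhausting_szlenk_derivation_def ..

text \<open>The recursion defining the derived sets is monotone, so its least fixed point exists and
  lies below every prefixed family; no well-foundedness of r is needed.\<close>

lemma szlenk_iter_emptyI:
  fixes r :: "'b rel" and E :: "'b \<Rightarrow> ('a::real_normed_vector \<Rightarrow> real) set"
  assumes prefixed: "\<And>a. a \<in> Field r \<Longrightarrow>
      K \<inter> (\<Inter>b\<in>{b. (b, a) \<in> r \<and> b \<noteq> a}. szlenk_deriv S \<epsilon> (E b)) \<subseteq> E a"
    and final: "K \<inter> (\<Inter>b\<in>Field r. szlenk_deriv S \<epsilon> (E b)) = {}"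
  shows "szlenk_iter_empty S \<epsilon> K r"
proof -
  define step where "step D = (\<lambda>a. K \<inter> (\<Inter>b\<in>{b. (b, a) \<in> r \<and> b \<noteq> a}. szlenk_deriv S \<epsilon> (D b)))"
    for D :: "'b \<Rightarrow> ('a \<Rightarrow> real) set"
  have "mono step"
  proof (rule monoI)
    fix D D' :: "'b \<Rightarrow> ('a \<Rightarrow> real) set" assume "D \<le> D'"
    then have "szlenk_deriv S \<epsilon> (D b) \<subseteq> szlenk_deriv S \<epsilon> (D' b)" for b
      by (simp add: le_fun_def szlenk_deriv_mono)
    then show "step D \<le> step D'" unfolding step_def le_fun_def by blast
  qed
  define E' where "E' a = (if a \<in> Field r then E a else K)" for a
  have "step E' \<le> E'"
  proof (rule le_funI)
    fix a
    show "step E' a \<subseteq> E' a"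
    proof (cases "a \<in> Field r")
      case True
      have "E' b = E b" if "(b, a) \<in> r" for b unfolding E'_def using that by (auto intro: FieldI1)
      then have "step E' a = step E a" unfolding step_def by auto
      then show ?thesis using prefixed[OF True] True unfolding E'_def step_def by simp
    qed (simp add: step_def E'_def)
  qed
  then have "lfp step \<le> E'" by (rule lfp_lowerbound)
  then have "szlenk_deriv S \<epsilon> (lfp step b) \<subseteq> szlenk_deriv S \<epsilon> (E b)" if "b \<in> Field r" for b
    using that by (simp add: le_fun_def szlenk_deriv_mono E'_def split: if_splits)
  then have "K \<inter> (\<Inter>b\<in>Field r. szlenk_deriv S \<epsilon> (lfp step b)) = {}" using final by blast
  moreover have "lfp step a = step (lfp step) a" for a using lfp_unfold[OF \<open>mono step\<close>] by simp
  ultimately show ?thesis unfolding szlenk_iter_empty_def step_def by blast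
qed

lemma omega_pow_iff:
  "(f, g) \<in> omega_pow r \<longleftrightarrow> (\<forall>x. x \<notin> Field r \<longrightarrow> f x = 0 \<and> g x = 0)
       \<and> finite {x. f x \<noteq> 0} \<and> finite {x. g x \<noteq> 0}
       \<and> (f = g \<or> (\<exists>x. f x < g x \<and> (\<forall>y. (x, y) \<in> r \<and> y \<noteq> x \<longrightarrow> f y = g y)))"
  unfolding omega_pow_def by (simp only: mem_Collect_eq case_prod_conv)

lemma Field_omega_pow:
  "f \<in> Field (omega_pow r) \<longleftrightarrow> (\<forall>x. x \<notin> Field r \<longrightarrow> f x = 0) \<and> finite {x. f x \<noteq> 0}"
proof
  assume "f \<in> Field (omega_pow r)"
  then obtain g where "(f, g) \<in> omega_pow r \<or> (g, f) \<in> omega_pow r" unfolding Field_def by blast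
  then have "(\<forall>x. x \<notin> Field r \<longrightarrow> f x = 0 \<and> g x = 0) \<and> finite {x. f x \<noteq> 0}"
    unfolding omega_pow_iff by (elim disjE conjE) (simp_all add: conj_commute)
  then show "(\<forall>x. x \<notin> Field r \<longrightarrow> f x = 0) \<and> finite {x. f x \<noteq> 0}" by simp
next
  assume "(\<forall>x. x \<notin> Field r \<longrightarrow> f x = 0) \<and> finite {x. f x \<noteq> 0}"
  then have "(f, f) \<in> omega_pow r" unfolding omega_pow_iff by blast
  then show "f \<in> Field (omega_pow r)" by (rule FieldI1)
qed

lemma omega_pow_lessI:
  assumes "f \<in> Field (omega_pow r)" "g \<in> Field (omega_pow r)"
    and "f x < g x" "\<And>y. (x, y) \<in> r \<Longrightarrow> y \<noteq> x \<Longrightarrow> f y = g y"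
  shows "(f, g) \<in> omega_pow r" "f \<noteq> g"
proof -
  have "(\<forall>x. x \<notin> Field r \<longrightarrow> f x = 0) \<and> finite {x. f x \<noteq> 0}"
    "(\<forall>x. x \<notin> Field r \<longrightarrow> g x = 0) \<and> finite {x. g x \<noteq> 0}"
    using assms(1,2) unfolding Field_omega_pow by blast+
  then show "(f, g) \<in> omega_pow r" unfolding omega_pow_iff using assms(3,4) by blast
  show "f \<noteq> g" using assms(3) by auto
qed

lemma Field_ord_succ: "Field (ord_succ r) = insert None (Some ` Field r)"
  unfolding ord_succ_def Field_def by blast

lemma ord_succ_above_None: "(None, y) \<in> ord_succ r \<Longrightarrow> y = None"
  unfolding ord_succ_def by blast

lemma ord_succ_above_Some: "(Some a, y) \<in> ord_succ r \<Longrightarrow> y = None \<or> (\<exists>b. y = Some b \<and> (a, b) \<in> r)"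
  unfolding ord_succ_def by blast

text \<open>with_top n g encodes the ordinal \<omega>^\<alpha>\<cdot>n + g of \<omega>^(\<alpha>+1) = \<omega>^\<alpha>\<cdot>\<omega>.\<close>

definition with_top :: "nat \<Rightarrow> ('b \<Rightarrow> nat) \<Rightarrow> 'b option \<Rightarrow> nat" where
  "with_top n g x = (case x of None \<Rightarrow> n | Some b \<Rightarrow> g b)"

lemma with_top_None [simp]: "with_top n g None = n"
  and with_top_Some [simp]: "with_top n g (Some b) = g b"
  by (simp_all add: with_top_def)

lemma with_top_split: "with_top (f None) (\<lambda>b. f (Some b)) = f"
  by (rule ext) (simp add: with_top_def split: option.split)

lemma with_top_in_Field:
  assumes "g \<in> Field (omega_pow r)"
  shows "with_top n g \<in> Field (omega_pow (ord_succ r))"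
proof -
  have "{x. with_top n g x \<noteq> 0} \<subseteq> insert None (Some ` {b. g b \<noteq> 0})"
  proof
    fix x assume "x \<in> {x. with_top n g x \<noteq> 0}"
    then show "x \<in> insert None (Some ` {b. g b \<noteq> 0})" by (cases x) auto
  qed
  moreover have "with_top n g x = 0" if "x \<notin> insert None (Some ` Field r)" for x
    using that assms unfolding Field_omega_pow by (cases x) auto
  ultimately show ?thesis
    using assms unfolding Field_omega_pow Field_ord_succ by (auto intro: finite_subset)
qed

lemma Field_omega_pow_ord_succ_lower:
  assumes "f \<in> Field (omega_pow (ord_succ r))"
  shows "(\<lambda>b. f (Some b)) \<in> Field (omega_pow r)"
proof -
  have "finite (Some -` {x. f x \<noteq> 0})"
    using assms unfolding Field_omega_pow by (intro finite_vimageI) auto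
  moreover have "{b. f (Some b) \<noteq> 0} = Some -` {x. f x \<noteq> 0}" by auto
  ultimately show ?thesis
    using assms unfolding Field_omega_pow Field_ord_succ by auto
qed

lemma with_top_less_top:
  assumes "g \<in> Field (omega_pow r)" "g' \<in> Field (omega_pow r)" "m < n"
  shows "(with_top m g', with_top n g) \<in> omega_pow (ord_succ r)" "with_top m g' \<noteq> with_top n g"
proof -
  have "with_top m g' y = with_top n g y" if "(None, y) \<in> ord_succ r" "y \<noteq> None" for y
    using ord_succ_above_None that by blast
  then show "(with_top m g', with_top n g) \<in> omega_pow (ord_succ r)" "with_top m g' \<noteq> with_top n g"
    using omega_pow_lessI[where x = None, OF with_top_in_Field[OF assms(2)] with_top_in_Field[OF assms(1)]]
      assms(3) by auto
qed

lemma with_top_less_lower: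
  assumes "(g', g) \<in> omega_pow r" "g' \<noteq> g"
  shows "(with_top n g', with_top n g) \<in> omega_pow (ord_succ r)" "with_top n g' \<noteq> with_top n g"
proof -
  obtain x where x: "g' x < g x" "\<And>y. (x, y) \<in> r \<Longrightarrow> y \<noteq> x \<Longrightarrow> g' y = g y"
    using assms unfolding omega_pow_iff by blast
  have "g \<in> Field (omega_pow r)" "g' \<in> Field (omega_pow r)"
    using assms(1) by (auto intro: FieldI1 FieldI2)
  moreover have "with_top n g' y = with_top n g y"
    if y: "(Some x, y) \<in> ord_succ r" "y \<noteq> Some x" for y
  proof -
    consider "y = None" | b where "y = Some b" "(x, b) \<in> r" "b \<noteq> x"
      using ord_succ_above_Some[OF y(1)] y(2) by blast
    then show ?thesis by cases (simp_all add: x(2))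
  qed
  ultimately show "(with_top n g', with_top n g) \<in> omega_pow (ord_succ r)" "with_top n g' \<noteq> with_top n g"
    using omega_pow_lessI[where x = "Some x", OF with_top_in_Field with_top_in_Field] x(1) by auto
qed

section \<open>Projections from the star condition\<close>

definition nearly_isometric_restrictions ::
    "'i set \<Rightarrow> ('i \<Rightarrow> 'a::real_normed_vector set) \<Rightarrow> real \<Rightarrow> real \<Rightarrow> bool"
  where "nearly_isometric_restrictions I Y q e \<longleftrightarrow>
    (\<forall>i\<in>I. \<forall>\<phi>\<in>dual_ball UNIV. \<forall>\<psi>\<in>dual_ball UNIV.
      q * dnorm UNIV \<phi> < dnorm (Y i) \<phi> \<longrightarrow> q * dnorm UNIV \<psi> < dnorm (Y i) \<psi> \<longrightarrow>
      dnorm UNIV (\<lambda>x. \<phi> x - \<psi> x) < dnorm (Y i) (\<lambda>x. \<phi> x - \<psi> x) + e)"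

locale star_projections =
  fixes I :: "'i set" and Y :: "'i \<Rightarrow> 'a::real_normed_vector set"
    and P :: "'i \<Rightarrow> ('a \<Rightarrow> real) \<Rightarrow> 'a \<Rightarrow> real"
  assumes subspace_Y: "i \<in> I \<Longrightarrow> subspace (Y i)"
    and bounded_linear_P: "i \<in> I \<Longrightarrow> bounded_linear \<phi> \<Longrightarrow> bounded_linear (P i \<phi>)"
    and P_add: "i \<in> I \<Longrightarrow> bounded_linear \<phi> \<Longrightarrow> bounded_linear \<psi> \<Longrightarrow>
      P i (\<lambda>x. \<phi> x + \<psi> x) = (\<lambda>x. P i \<phi> x + P i \<psi> x)"
    and P_scale: "i \<in> I \<Longrightarrow> bounded_linear \<phi> \<Longrightarrow> P i (\<lambda>x. c * \<phi> x) = (\<lambda>x. c * P i \<phi> x)"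
    and P_idem: "i \<in> I \<Longrightarrow> bounded_linear \<phi> \<Longrightarrow> P i (P i \<phi>) = P i \<phi>"
    and P_eq_0_iff: "i \<in> I \<Longrightarrow> bounded_linear \<phi> \<Longrightarrow> P i \<phi> = (\<lambda>x. 0) \<longleftrightarrow> (\<forall>y\<in>Y i. \<phi> y = 0)"
    and dnorm_P_le: "i \<in> I \<Longrightarrow> bounded_linear \<phi> \<Longrightarrow> dnorm UNIV (P i \<phi>) \<le> dnorm UNIV \<phi>"
    and P_star: "e > 0 \<Longrightarrow> \<exists>\<delta>>0. \<forall>i\<in>I. \<forall>\<phi>. bounded_linear \<phi> \<longrightarrow>
      dnorm UNIV \<phi> = 1 \<and> 2 - \<delta> < dnorm UNIV (\<lambda>x. \<phi> x + P i \<phi> x) \<longrightarrow>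
      dnorm UNIV (\<lambda>x. \<phi> x - P i \<phi> x) < e"

lemma star_condition_imp_star_projections:
  fixes Y :: "'i \<Rightarrow> 'a::real_normed_vector set"
  assumes "star_condition I Y" "\<And>i. i \<in> I \<Longrightarrow> subspace (Y i)"
  obtains P where "star_projections I Y P"
proof -
  obtain P :: "'i \<Rightarrow> ('a \<Rightarrow> real) \<Rightarrow> 'a \<Rightarrow> real" where P: "\<forall>i\<in>I.
          (\<forall>\<phi>\<in>dual_sp UNIV. P i \<phi> \<in> dual_sp UNIV)
        \<and> (\<forall>\<phi>\<in>dual_sp UNIV. \<forall>\<psi>\<in>dual_sp UNIV. P i (\<lambda>x. \<phi> x + \<psi> x) = (\<lambda>x. P i \<phi> x + P i \<psi> x))
        \<and> (\<forall>c. \<forall>\<phi>\<in>dual_sp UNIV. P i (\<lambda>x. c * \<phi> x) = (\<lambda>x. c * P i \<phi> x))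
        \<and> (\<forall>\<phi>\<in>dual_sp UNIV. P i (P i \<phi>) = P i \<phi>)
        \<and> {\<phi>\<in>dual_sp UNIV. P i \<phi> = (\<lambda>x. 0)} = {\<phi>\<in>dual_sp UNIV. \<forall>y\<in>Y i. \<phi> y = 0}
        \<and> (\<forall>\<phi>\<in>dual_sp UNIV. dnorm UNIV (P i \<phi>) \<le> dnorm UNIV \<phi>)"
    and star: "\<forall>e>0. \<exists>\<delta>>0. \<forall>i\<in>I. \<forall>\<phi>\<in>dual_sp UNIV.
          dnorm UNIV \<phi> = 1 \<and> dnorm UNIV (\<lambda>x. \<phi> x + P i \<phi> x) > 2 - \<delta>
            \<longrightarrow> dnorm UNIV (\<lambda>x. \<phi> x - P i \<phi> x) < e"
    using assms(1) unfolding star_condition_def by blast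
  have "star_projections I Y P"
  proof (rule star_projections.intro, goal_cases)
    case (2 i \<phi>)
    then show ?case using bspec[OF P] dual_sp_UNIV_iff by blast
  next
    case (3 i \<phi> \<psi>)
    then show ?case using bspec[OF P] dual_sp_UNIV_iff by blast
  next
    case (4 i \<phi> c)
    then show ?case using bspec[OF P] dual_sp_UNIV_iff by blast
  next
    case (5 i \<phi>)
    then show ?case using bspec[OF P] dual_sp_UNIV_iff by blast
  next
    case (6 i \<phi>)
    then have "{\<phi>\<in>dual_sp UNIV. P i \<phi> = (\<lambda>x. 0)} = {\<phi>\<in>dual_sp UNIV. \<forall>y\<in>Y i. \<phi> y = 0}"
      using bspec[OF P] by blast
    then show ?case using 6 dual_sp_UNIV_iff unfolding set_eq_iff mem_Collect_eq by blast
  next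
    case (7 i \<phi>)
    then show ?case using bspec[OF P] dual_sp_UNIV_iff by blast
  next
    case (8 e)
    then show ?case using star by (simp add: Ball_def dual_sp_UNIV_iff)
  qed (fact assms(2))
  then show thesis by (rule that)
qed

context star_projections
begin

lemma P_diff:
  assumes "i \<in> I" "bounded_linear \<phi>" "bounded_linear \<psi>"
  shows "P i (\<lambda>x. \<phi> x - \<psi> x) = (\<lambda>x. P i \<phi> x - P i \<psi> x)"
proof -
  have "P i (\<lambda>x. \<phi> x - \<psi> x) = P i (\<lambda>x. \<phi> x + (-1) * \<psi> x)" by simp
  also have "\<dots> = (\<lambda>x. P i \<phi> x + (-1) * P i \<psi> x)"
    using P_add[OF assms(1,2) bounded_linear_const_mult[OF assms(3), of "-1"]] P_scale[OF assms(1,3), of "-1"]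
    by simp
  finally show ?thesis by simp
qed

lemma P_eq_on_Y:
  assumes "i \<in> I" "bounded_linear \<phi>" "y \<in> Y i"
  shows "P i \<phi> y = \<phi> y"
proof -
  have "P i (\<lambda>x. \<phi> x - P i \<phi> x) = (\<lambda>x. 0)"
    using P_diff[OF assms(1,2) bounded_linear_P[OF assms(1,2)]] P_idem[OF assms(1,2)] by simp
  then show ?thesis
    using P_eq_0_iff[OF assms(1) bounded_linear_sub[OF assms(2) bounded_linear_P[OF assms(1,2)]]] assms(3)
    by simp
qed

lemma P_cong_Y:
  assumes "i \<in> I" "bounded_linear \<phi>" "bounded_linear \<psi>" "\<And>y. y \<in> Y i \<Longrightarrow> \<phi> y = \<psi> y"
  shows "P i \<phi> = P i \<psi>"
proof -
  have "(\<lambda>x. P i \<phi> x - P i \<psi> x) = (\<lambda>x. 0)"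
    using P_eq_0_iff[OF assms(1) bounded_linear_sub[OF assms(2,3)]] assms(4) P_diff[OF assms(1-3)]
    by simp
  then show ?thesis by (simp add: fun_eq_iff)
qed

text \<open>P i \<phi> depends only on the restriction of \<phi> to Y i, so a norm-preserving
  Hahn-Banach extension of that restriction bounds its norm.\<close>

lemma dnorm_P_le_dnorm_Y:
  assumes "i \<in> I" "bounded_linear \<phi>"
  shows "dnorm UNIV (P i \<phi>) \<le> dnorm (Y i) \<phi>"
proof -
  obtain F where F: "bounded_linear F" "\<And>y. y \<in> Y i \<Longrightarrow> F y = \<phi> y" "dnorm UNIV F \<le> dnorm (Y i) \<phi>"
    using dual_norm_preserving_extension[OF subspace_Y[OF assms(1)] assms(2)] by blast
  have "P i \<phi> = P i F" using P_cong_Y[OF assms F(1)] F(2) by simp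
  then show ?thesis using dnorm_P_le[OF assms(1) F(1)] F(3) by simp
qed

lemma dnorm_sub_P_less:
  assumes "e > 0"
  obtains q where "0 < q" "q < 1" "\<And>i \<phi>. i \<in> I \<Longrightarrow> bounded_linear \<phi> \<Longrightarrow>
    q * dnorm UNIV \<phi> < dnorm (Y i) \<phi> \<Longrightarrow> dnorm UNIV (\<lambda>x. \<phi> x - P i \<phi> x) < e * dnorm UNIV \<phi>"
proof -
  obtain \<delta> where "\<delta> > 0" and \<delta>: "\<forall>i\<in>I. \<forall>\<phi>. bounded_linear \<phi> \<longrightarrow>
      dnorm UNIV \<phi> = 1 \<and> 2 - \<delta> < dnorm UNIV (\<lambda>x. \<phi> x + P i \<phi> x) \<longrightarrow>
      dnorm UNIV (\<lambda>x. \<phi> x - P i \<phi> x) < e"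
    using P_star[OF assms] by auto
  define q where "q = max (1/2) (1 - \<delta>/2)"
  have q: "0 < q" "q < 1" "2 - \<delta> \<le> 2 * q" unfolding q_def using \<open>\<delta> > 0\<close> by (auto simp: max_def)
  show thesis
  proof (rule that[OF q(1,2)])
    fix i \<phi> assume i: "i \<in> I" and \<phi>: "bounded_linear \<phi>" and gt: "q * dnorm UNIV \<phi> < dnorm (Y i) \<phi>"
    have Y0: "0 \<in> Y i" using subspace_0[OF subspace_Y[OF i]] .
    define t where "t = dnorm UNIV \<phi>"
    have "dnorm (Y i) \<phi> \<le> t" unfolding t_def using dnorm_mono[OF \<phi> Y0] by simp
    moreover have "0 \<le> q * t" unfolding t_def using q(1) dnorm_nonneg[OF \<phi>] by simp
    ultimately have "0 < t" using gt unfolding t_def by linarith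
    define \<phi>1 where "\<phi>1 = (\<lambda>x. (1/t) * \<phi> x)"
    have \<phi>1: "bounded_linear \<phi>1" unfolding \<phi>1_def by (rule bounded_linear_const_mult[OF \<phi>])
    have "dnorm UNIV \<phi>1 = 1"
      unfolding \<phi>1_def using dnorm_scale[OF \<phi>, of UNIV "1/t"] \<open>0 < t\<close> t_def by simp
    have P\<phi>1: "P i \<phi>1 = (\<lambda>x. (1/t) * P i \<phi> x)" unfolding \<phi>1_def by (rule P_scale[OF i \<phi>])
    have "(2 - \<delta>) * t \<le> 2 * q * t" using q(3) \<open>0 < t\<close> by (intro mult_right_mono) auto
    also have "\<dots> < 2 * dnorm (Y i) \<phi>" using gt unfolding t_def by simp
    finally have "2 - \<delta> < (2/t) * dnorm (Y i) \<phi>" using \<open>0 < t\<close> by (simp add: field_simps)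
    also have "\<dots> = dnorm (Y i) (\<lambda>x. (2/t) * \<phi> x)"
      using dnorm_scale[OF \<phi> Y0, of "2/t"] \<open>0 < t\<close> by simp
    also have "\<dots> = dnorm (Y i) (\<lambda>x. \<phi>1 x + P i \<phi>1 x)"
      unfolding P\<phi>1 by (rule dnorm_cong) (simp add: \<phi>1_def P_eq_on_Y[OF i \<phi>])
    also have "\<dots> \<le> dnorm UNIV (\<lambda>x. \<phi>1 x + P i \<phi>1 x)"
      using bounded_linear_add[OF \<phi>1 bounded_linear_P[OF i \<phi>1]] Y0 by (rule dnorm_mono) simp
    finally have "dnorm UNIV (\<lambda>x. \<phi>1 x - P i \<phi>1 x) < e"
      using \<delta>[rule_format, OF i \<phi>1] \<open>dnorm UNIV \<phi>1 = 1\<close> by blast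
    moreover have "dnorm UNIV (\<lambda>x. \<phi>1 x - P i \<phi>1 x) = (1/t) * dnorm UNIV (\<lambda>x. \<phi> x - P i \<phi> x)"
    proof -
      have "dnorm UNIV (\<lambda>x. \<phi>1 x - P i \<phi>1 x) = dnorm UNIV (\<lambda>x. (1/t) * (\<phi> x - P i \<phi> x))"
        unfolding P\<phi>1 by (simp add: \<phi>1_def right_diff_distrib)
      also have "\<dots> = (1/t) * dnorm UNIV (\<lambda>x. \<phi> x - P i \<phi> x)"
        using dnorm_scale[OF bounded_linear_sub[OF \<phi> bounded_linear_P[OF i \<phi>]], of UNIV "1/t"] \<open>0 < t\<close>
        by simp
      finally show ?thesis .
    qed
    ultimately show "dnorm UNIV (\<lambda>x. \<phi> x - P i \<phi> x) < e * dnorm UNIV \<phi>"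
      using \<open>0 < t\<close> unfolding t_def by (simp add: field_simps)
  qed
qed

lemma dnorm_diff_less_dnorm_Y:
  assumes i: "i \<in> I" and \<phi>: "bounded_linear \<phi>" and \<psi>: "bounded_linear \<psi>"
    and "dnorm UNIV (\<lambda>x. \<phi> x - P i \<phi> x) < e" "dnorm UNIV (\<lambda>x. \<psi> x - P i \<psi> x) < e"
  shows "dnorm UNIV (\<lambda>x. \<phi> x - \<psi> x) < dnorm (Y i) (\<lambda>x. \<phi> x - \<psi> x) + 2 * e"
proof -
  define a where "a x = \<phi> x - P i \<phi> x" for x
  define b where "b x = \<psi> x - P i \<psi> x" for x
  have a: "bounded_linear a" and b: "bounded_linear b"
    unfolding a_def b_def
    using bounded_linear_sub[OF \<phi> bounded_linear_P[OF i \<phi>]] bounded_linear_sub[OF \<psi> bounded_linear_P[OF i \<psi>]]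
    by simp_all
  have "dnorm UNIV (\<lambda>x. \<phi> x - \<psi> x) = dnorm UNIV (\<lambda>x. (a x - b x) + P i (\<lambda>x. \<phi> x - \<psi> x) x)"
    by (rule dnorm_cong) (simp add: a_def b_def P_diff[OF i \<phi> \<psi>])
  also have "\<dots> \<le> dnorm UNIV (\<lambda>x. a x - b x) + dnorm UNIV (P i (\<lambda>x. \<phi> x - \<psi> x))"
    using bounded_linear_sub[OF a b] bounded_linear_P[OF i bounded_linear_sub[OF \<phi> \<psi>]]
    by (intro dnorm_add_le) auto
  also have "dnorm UNIV (\<lambda>x. a x - b x) \<le> dnorm UNIV a + dnorm UNIV b"
    using a b by (intro dnorm_diff_le) auto
  also have "dnorm UNIV (P i (\<lambda>x. \<phi> x - \<psi> x)) \<le> dnorm (Y i) (\<lambda>x. \<phi> x - \<psi> x)"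
    using dnorm_P_le_dnorm_Y[OF i bounded_linear_sub[OF \<phi> \<psi>]] .
  finally show ?thesis using assms(4,5) unfolding a_def b_def by simp
qed

lemma nearly_isometric_restrictions_exist:
  assumes "e > 0"
  shows "\<exists>q. 0 < q \<and> q < 1 \<and> nearly_isometric_restrictions I Y q e"
proof -
  obtain q where q: "0 < q" "q < 1" and close: "\<And>i \<phi>. i \<in> I \<Longrightarrow> bounded_linear \<phi> \<Longrightarrow>
      q * dnorm UNIV \<phi> < dnorm (Y i) \<phi> \<Longrightarrow> dnorm UNIV (\<lambda>x. \<phi> x - P i \<phi> x) < e/2 * dnorm UNIV \<phi>"
    using dnorm_sub_P_less[of "e/2"] assms by auto
  have half: "dnorm UNIV (\<lambda>x. \<phi> x - P i \<phi> x) < e/2"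
    if i: "i \<in> I" and \<phi>: "\<phi> \<in> dual_ball UNIV" and gt: "q * dnorm UNIV \<phi> < dnorm (Y i) \<phi>" for i \<phi>
  proof -
    have bl: "bounded_linear \<phi>" and le1: "dnorm UNIV \<phi> \<le> 1" using \<phi> dual_ball_UNIV_iff by blast+
    have "e/2 * dnorm UNIV \<phi> \<le> e/2" using le1 assms by (intro mult_left_le) auto
    then show ?thesis using close[OF i bl gt] by linarith
  qed
  have "nearly_isometric_restrictions I Y q e"
    unfolding nearly_isometric_restrictions_def
  proof (intro ballI impI)
    fix i \<phi> \<psi> assume i: "i \<in> I" and \<phi>: "\<phi> \<in> dual_ball UNIV" and \<psi>: "\<psi> \<in> dual_ball UNIV"
      and "q * dnorm UNIV \<phi> < dnorm (Y i) \<phi>" "q * dnorm UNIV \<psi> < dnorm (Y i) \<psi>"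
    then have "dnorm UNIV (\<lambda>x. \<phi> x - P i \<phi> x) < e/2" "dnorm UNIV (\<lambda>x. \<psi> x - P i \<psi> x) < e/2"
      using half by blast+
    moreover have "bounded_linear \<phi>" "bounded_linear \<psi>" using \<phi> \<psi> dual_ball_UNIV_iff by blast+
    ultimately show "dnorm UNIV (\<lambda>x. \<phi> x - \<psi> x) < dnorm (Y i) (\<lambda>x. \<phi> x - \<psi> x) + e"
      using dnorm_diff_less_dnorm_Y[OF i] by fastforce
  qed
  then show ?thesis using q by blast
qed

end

section \<open>Gluing the Szlenk derivations of the Y i\<close>

locale szlenk_gluing =
  fixes I :: "'i set" and Y :: "'i \<Rightarrow> 'a::real_normed_vector set" and \<alpha> :: "'b rel"
    and \<epsilon> q :: real and D :: "'i \<Rightarrow> ('b \<Rightarrow> nat) \<Rightarrow> ('a \<Rightarrow> real) set"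
  assumes subspace_Y: "i \<in> I \<Longrightarrow> subspace (Y i)"
    and dense_Union: "closure (\<Union>i\<in>I. Y i) = UNIV"
    and eps_pos: "0 < \<epsilon>" and q_pos: "0 < q" and q_less_1: "q < 1"
    and nearly_isometric: "nearly_isometric_restrictions I Y q (\<epsilon>/2)"
    and derivation_Y:
      "i \<in> I \<Longrightarrow> exhausting_szlenk_derivation (Y i) (\<epsilon>/2) (dual_ball (Y i)) (omega_pow \<alpha>) (D i)"
begin

lemma D_rec:
  assumes "i \<in> I" "g \<in> Field (omega_pow \<alpha>)"
  shows "D i g = dual_ball (Y i) \<inter> (\<Inter>h\<in>{h. (h, g) \<in> omega_pow \<alpha> \<and> h \<noteq> g}. szlenk_deriv (Y i) (\<epsilon>/2) (D i h))"
  using derivation_Y[OF assms(1)] assms(2) unfolding exhausting_szlenk_derivation_def by blast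

lemma D_final:
  assumes "i \<in> I"
  shows "dual_ball (Y i) \<inter> (\<Inter>h\<in>Field (omega_pow \<alpha>). szlenk_deriv (Y i) (\<epsilon>/2) (D i h)) = {}"
  using derivation_Y[OF assms] unfolding exhausting_szlenk_derivation_def by (rule conjunct2)

lemma dnorm_diff_less_restrict:
  assumes "i \<in> I" "\<phi> \<in> dual_ball UNIV" "\<psi> \<in> dual_ball UNIV"
    "q * dnorm UNIV \<phi> < dnorm (Y i) \<phi>" "q * dnorm UNIV \<psi> < dnorm (Y i) \<psi>"
  shows "dnorm UNIV (\<lambda>x. \<phi> x - \<psi> x) < dnorm (Y i) (\<lambda>x. \<phi> x - \<psi> x) + \<epsilon>/2"
  using nearly_isometric assms unfolding nearly_isometric_restrictions_def by blast

text \<open>The sets E of the proof sketch, indexed by with_top n g.\<close>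

definition glued :: "('b option \<Rightarrow> nat) \<Rightarrow> ('a \<Rightarrow> real) set" where
  "glued f = {\<phi> \<in> dual_ball UNIV. dnorm UNIV \<phi> \<le> q ^ f None
     \<and> (\<forall>i\<in>I. q ^ Suc (f None) < dnorm (Y i) \<phi> \<longrightarrow> dual_restrict (Y i) \<phi> \<in> D i (\<lambda>b. f (Some b)))}"

lemma glued_large_on_Y:
  assumes i: "i \<in> I" and \<psi>: "\<psi> \<in> glued f"
    and y: "y \<in> Y i" "norm y \<le> 1" "q ^ Suc (f None) < \<bar>\<psi> y\<bar>"
  shows "q * dnorm UNIV \<psi> < dnorm (Y i) \<psi>" "dual_restrict (Y i) \<psi> \<in> D i (\<lambda>b. f (Some b))"
proof -
  have "bounded_linear \<psi>" and le: "dnorm UNIV \<psi> \<le> q ^ f None"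
    using \<psi> unfolding glued_def dual_ball_UNIV_iff by blast+
  have "q ^ Suc (f None) < dnorm (Y i) \<psi>"
    using y(3) dnorm_upper[OF \<open>bounded_linear \<psi>\<close> y(1,2)] by linarith
  moreover have "q * dnorm UNIV \<psi> \<le> q ^ Suc (f None)" using le q_pos by simp
  ultimately show "q * dnorm UNIV \<psi> < dnorm (Y i) \<psi>" by linarith
  show "dual_restrict (Y i) \<psi> \<in> D i (\<lambda>b. f (Some b))"
    using \<psi> i \<open>q ^ Suc (f None) < dnorm (Y i) \<psi>\<close> unfolding glued_def by blast
qed

text \<open>The weak* neighbourhoods of \<phi> are cut down by the open condition q ^ Suc n < |\<psi> y|,
  which forces all nearby \<psi> to nearly attain their norm on Y i as well, so that differences
  of their restrictions are at least \<epsilon>/2 by nearly_isometric_restrictions.\<close>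

lemma dual_restrict_in_szlenk_deriv:
  assumes i: "i \<in> I" and \<phi>: "\<phi> \<in> szlenk_deriv UNIV \<epsilon> (glued f)"
    and large: "q ^ Suc (f None) < dnorm (Y i) \<phi>"
  shows "dual_restrict (Y i) \<phi> \<in> szlenk_deriv (Y i) (\<epsilon>/2) (D i (\<lambda>b. f (Some b)))"
proof -
  let ?c = "q ^ Suc (f None)" and ?D = "D i (\<lambda>b. f (Some b))"
  have \<phi>_glued: "\<phi> \<in> glued f" using \<phi> szlenk_deriv_subset by blast
  obtain y where y: "y \<in> Y i" "norm y \<le> 1" "?c < \<bar>\<phi> y\<bar>"
    using less_dnormE[OF subspace_0[OF subspace_Y[OF i]] large] by blast
  have "\<exists>g\<in>V \<inter> ?D. \<exists>g'\<in>V \<inter> ?D. \<epsilon>/2 < dnorm (Y i) (\<lambda>x. g x - g' x)"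
    if U: "openin (weak_star (Y i)) U" "dual_restrict (Y i) \<phi> \<in> U" "U \<subseteq> V" for U V
  proof -
    define U' where "U' = {\<psi>. dual_restrict (Y i) \<psi> \<in> U} \<inter> {\<psi>. \<psi> y \<in> {s. ?c < \<bar>s\<bar>}}"
    have "open {s::real. ?c < \<bar>s\<bar>}" by (intro open_Collect_less continuous_intros)
    then have "openin (weak_star UNIV) U'"
      unfolding U'_def by (intro openin_Int openin_weak_star_dual_restrict[OF U(1)] openin_weak_star_evaluation) auto
    moreover have "\<phi> \<in> U'" unfolding U'_def using U(2) y(3) by simp
    ultimately obtain \<psi>1 \<psi>2 where \<psi>: "\<psi>1 \<in> U' \<inter> glued f" "\<psi>2 \<in> U' \<inter> glued f"
      "\<epsilon> < dnorm UNIV (\<lambda>x. \<psi>1 x - \<psi>2 x)"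
      using \<phi> unfolding szlenk_deriv_def by blast
    have near: "q * dnorm UNIV \<psi> < dnorm (Y i) \<psi>" "dual_restrict (Y i) \<psi> \<in> V \<inter> ?D" "\<psi> \<in> dual_ball UNIV"
      if "\<psi> \<in> U' \<inter> glued f" for \<psi>
      using that glued_large_on_Y[OF i _ y(1,2)] U(3) unfolding U'_def glued_def by auto
    have "\<epsilon> < dnorm (Y i) (\<lambda>x. \<psi>1 x - \<psi>2 x) + \<epsilon>/2"
      using dnorm_diff_less_restrict[OF i near(3)[OF \<psi>(1)] near(3)[OF \<psi>(2)] near(1)[OF \<psi>(1)] near(1)[OF \<psi>(2)]] \<psi>(3)
      by linarith
    moreover have "dnorm (Y i) (\<lambda>x. \<psi>1 x - \<psi>2 x)
        = dnorm (Y i) (\<lambda>x. dual_restrict (Y i) \<psi>1 x - dual_restrict (Y i) \<psi>2 x)"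
      by (rule dnorm_cong) (simp add: dual_restrict_def)
    ultimately show ?thesis using near(2)[OF \<psi>(1)] near(2)[OF \<psi>(2)] by force
  qed
  moreover have "dual_restrict (Y i) \<phi> \<in> ?D" using glued_large_on_Y(2)[OF i \<phi>_glued y] .
  ultimately show ?thesis unfolding szlenk_deriv_def by blast
qed

lemma dnorm_le_if_deriv_of_all_lower:
  assumes \<phi>: "\<phi> \<in> dual_ball UNIV"
    and below: "\<And>g. g \<in> Field (omega_pow \<alpha>) \<Longrightarrow> \<phi> \<in> szlenk_deriv UNIV \<epsilon> (glued (with_top m g))"
  shows "dnorm UNIV \<phi> \<le> q ^ Suc m"
proof -
  have bl: "bounded_linear \<phi>" using \<phi> dual_ball_UNIV_iff by blast
  have "dnorm (Y i) \<phi> \<le> q ^ Suc m" if i: "i \<in> I" for i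
  proof (rule ccontr)
    assume "\<not> dnorm (Y i) \<phi> \<le> q ^ Suc m"
    then have "dual_restrict (Y i) \<phi> \<in> szlenk_deriv (Y i) (\<epsilon>/2) (D i g)" if "g \<in> Field (omega_pow \<alpha>)" for g
      using dual_restrict_in_szlenk_deriv[OF i below[OF that]] by simp
    moreover have "dual_restrict (Y i) \<phi> \<in> dual_ball (Y i)"
      using dual_restrict_in_dual_ball[OF \<phi> subspace_Y[OF i]] .
    ultimately show False using D_final[OF i] by blast
  qed
  then have "\<bar>\<phi> y\<bar> \<le> q ^ Suc m * norm y" if "y \<in> (\<Union>i\<in>I. Y i)" for y
    using that abs_le_dnorm_mult_norm[OF bl subspace_Y] by (fastforce intro: order_trans mult_right_mono)
  then show ?thesis using dnorm_le_if_dense[OF bl dense_Union] q_pos by simp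
qed

lemma dual_restrict_in_D_if_deriv_of_lower:
  assumes \<phi>: "\<phi> \<in> dual_ball UNIV" and i: "i \<in> I" and g: "g \<in> Field (omega_pow \<alpha>)"
    and large: "q ^ Suc n < dnorm (Y i) \<phi>"
    and below: "\<And>g'. (g', g) \<in> omega_pow \<alpha> \<Longrightarrow> g' \<noteq> g \<Longrightarrow>
      \<phi> \<in> szlenk_deriv UNIV \<epsilon> (glued (with_top n g'))"
  shows "dual_restrict (Y i) \<phi> \<in> D i g"
proof -
  have "dual_restrict (Y i) \<phi> \<in> szlenk_deriv (Y i) (\<epsilon>/2) (D i g')"
    if "(g', g) \<in> omega_pow \<alpha>" "g' \<noteq> g" for g'
    using dual_restrict_in_szlenk_deriv[OF i below[OF that]] large by simp
  then show ?thesis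
    using D_rec[OF i g] dual_restrict_in_dual_ball[OF \<phi> subspace_Y[OF i]] by blast
qed

lemma glued_prefixed:
  assumes f: "f \<in> Field (omega_pow (ord_succ \<alpha>))"
  shows "dual_ball UNIV \<inter> (\<Inter>h\<in>{h. (h, f) \<in> omega_pow (ord_succ \<alpha>) \<and> h \<noteq> f}.
      szlenk_deriv UNIV \<epsilon> (glued h)) \<subseteq> glued f"
proof
  fix \<phi> assume \<phi>_in: "\<phi> \<in> dual_ball UNIV \<inter> (\<Inter>h\<in>{h. (h, f) \<in> omega_pow (ord_succ \<alpha>) \<and> h \<noteq> f}.
      szlenk_deriv UNIV \<epsilon> (glued h))"
  then have \<phi>: "\<phi> \<in> dual_ball UNIV" by blast
  define n where "n = f None"
  define g where "g = (\<lambda>b. f (Some b))"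
  have f_eq: "f = with_top n g" unfolding n_def g_def by (rule with_top_split[symmetric])
  have g: "g \<in> Field (omega_pow \<alpha>)"
    unfolding g_def by (rule Field_omega_pow_ord_succ_lower[OF f])
  have below: "\<phi> \<in> szlenk_deriv UNIV \<epsilon> (glued h)"
    if "(h, with_top n g) \<in> omega_pow (ord_succ \<alpha>)" "h \<noteq> with_top n g" for h
    using \<phi>_in that f_eq by blast
  have "dnorm UNIV \<phi> \<le> q ^ n"
  proof (cases n)
    case 0
    then show ?thesis using \<phi> unfolding dual_ball_UNIV_iff by simp
  next
    case (Suc m)
    show ?thesis
      unfolding Suc using dnorm_le_if_deriv_of_all_lower[OF \<phi>] below with_top_less_top[OF g] Suc by blast
  qed
  moreover have "dual_restrict (Y i) \<phi> \<in> D i g" if "i \<in> I" "q ^ Suc n < dnorm (Y i) \<phi>" for i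
    using dual_restrict_in_D_if_deriv_of_lower[OF \<phi> that(1) g that(2)] below with_top_less_lower by blast
  ultimately show "\<phi> \<in> glued f" using \<phi> unfolding glued_def n_def g_def by blast
qed

lemma glued_final:
  "dual_ball UNIV \<inter> (\<Inter>f\<in>Field (omega_pow (ord_succ \<alpha>)). szlenk_deriv UNIV \<epsilon> (glued f)) = {}"
proof -
  have "\<exists>N. q ^ N < \<epsilon>/2" by (rule real_arch_pow_inv) (use eps_pos q_less_1 in auto)
  then obtain N where N: "q ^ N < \<epsilon>/2" ..
  define f where "f = with_top N (\<lambda>_::'b. 0)"
  have f: "f \<in> Field (omega_pow (ord_succ \<alpha>))"
    unfolding f_def by (rule with_top_in_Field) (simp add: Field_omega_pow)
  have "szlenk_deriv UNIV \<epsilon> (glued f) = {}"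
  proof (rule ccontr)
    assume "szlenk_deriv UNIV \<epsilon> (glued f) \<noteq> {}"
    moreover have "openin (weak_star UNIV) UNIV"
      using openin_weak_star_evaluation[of 0 UNIV UNIV] by simp
    ultimately obtain \<psi>1 \<psi>2 where "\<psi>1 \<in> glued f" "\<psi>2 \<in> glued f" "\<epsilon> < dnorm UNIV (\<lambda>x. \<psi>1 x - \<psi>2 x)"
      unfolding szlenk_deriv_def by blast
    moreover from this have "bounded_linear \<psi>1" "dnorm UNIV \<psi>1 \<le> q ^ N" "bounded_linear \<psi>2" "dnorm UNIV \<psi>2 \<le> q ^ N"
      unfolding glued_def f_def dual_ball_UNIV_iff by auto
    ultimately show False using dnorm_diff_le[of \<psi>1 \<psi>2 UNIV] N by simp
  qed
  then show ?thesis using f by blast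
qed

theorem szlenk_iter_empty_ord_succ:
  "szlenk_iter_empty (UNIV :: 'a set) \<epsilon> (dual_ball UNIV) (omega_pow (ord_succ \<alpha>))"
  by (rule szlenk_iter_emptyI[OF glued_prefixed glued_final])

end

theorem lemma3p11:
  fixes I :: "'i set" and Y :: "'i \<Rightarrow> 'a::banach set" and \<alpha> :: "'b rel"
  assumes "\<forall>i\<in>I. subspace (Y i) \<and> closed (Y i)"
    and "star_condition I Y"
    and "Well_order \<alpha>"
    and "\<forall>i\<in>I. szlenk_le (Y i) (omega_pow \<alpha>)"
    and "closure (\<Union>i\<in>I. Y i) = UNIV"
  shows "szlenk_le (UNIV :: 'a set) (omega_pow (ord_succ \<alpha>))"
  unfolding szlenk_le_def
proof (intro allI impI)
  fix \<epsilon> :: real assume "\<epsilon> > 0"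
  have subspace: "\<And>i. i \<in> I \<Longrightarrow> subspace (Y i)" using assms(1) by blast
  obtain P where P: "star_projections I Y P"
    using star_condition_imp_star_projections[OF assms(2) subspace] .
  obtain q where "0 < q" "q < 1" "nearly_isometric_restrictions I Y q (\<epsilon>/2)"
    using star_projections.nearly_isometric_restrictions_exist[OF P, of "\<epsilon>/2"] \<open>\<epsilon> > 0\<close> by auto
  moreover have "\<forall>i\<in>I. \<exists>D. exhausting_szlenk_derivation (Y i) (\<epsilon>/2) (dual_ball (Y i)) (omega_pow \<alpha>) D"
    using assms(4) \<open>\<epsilon> > 0\<close> by (simp add: szlenk_le_def szlenk_iter_empty_iff)
  then obtain D where
    "\<forall>i\<in>I. exhausting_szlenk_derivation (Y i) (\<epsilon>/2) (dual_ball (Y i)) (omega_pow \<alpha>) (D i)"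
    by (rule bchoice[THEN exE])
  ultimately interpret szlenk_gluing I Y \<alpha> \<epsilon> q D
    using subspace assms(5) \<open>\<epsilon> > 0\<close> by unfold_locales auto
  show "szlenk_iter_empty (UNIV :: 'a set) \<epsilon> (dual_ball UNIV) (omega_pow (ord_succ \<alpha>))"
    by (rule szlenk_iter_empty_ord_succ)
qed

end
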